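(* Let $n\ge 3$ and let $G$ be a graph on $2n$ vertices with at least $n^2-1$ edges that contains no two distinct vertices of the same degree joined by a path of length three. Let $\beta$ be the largest integer such that $G$ contains two distinct vertices of degree $\beta$. Then $\beta\le n+1$. In particular, if $\beta=n+1$, then $G$ is isomorphic to $K_{n+1,n-1}$.
   Context: A path of length three joining vertices $a$ and $b$ is a path $a\,x\,y\,b$ with four distinct vertices and three edges. Graphs are finite and simple. *)

theory Defs
  imports Main
begin

definition simple_graph :: "'a set \<Rightarrow> ('a \<Rightarrow> 'a \<Rightarrow> bool) \<Rightarrow> bool" where
  "simple_graph V E \<longleftrightarrow> finite V \<and> (\<forall>x y. E x y \<longrightarrow> x \<in> V \<and> y \<in> V)
     \<and> (\<forall>x y. E x y \<longrightarrow> E y x) \<and> (\<forall>x. \<not> E x x)"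

definition edges :: "'a set \<Rightarrow> ('a \<Rightarrow> 'a \<Rightarrow> bool) \<Rightarrow> 'a set set" where
  "edges V E = {{x, y} | x y. x \<in> V \<and> y \<in> V \<and> E x y}"

definition degree :: "'a set \<Rightarrow> ('a \<Rightarrow> 'a \<Rightarrow> bool) \<Rightarrow> 'a \<Rightarrow> nat" where
  "degree V E x = card {y \<in> V. E x y}"

definition path3 :: "'a set \<Rightarrow> ('a \<Rightarrow> 'a \<Rightarrow> bool) \<Rightarrow> 'a \<Rightarrow> 'a \<Rightarrow> bool" where
  "path3 V E a b \<longleftrightarrow> (\<exists>x y. x \<in> V \<and> y \<in> V \<and> distinct [a, x, y, b]
      \<and> E a x \<and> E x y \<and> E y b)"

definition graph_iso :: "'a set \<Rightarrow> ('a \<Rightarrow> 'a \<Rightarrow> bool) \<Rightarrow> 'b set \<Rightarrow> ('b \<Rightarrow> 'b \<Rightarrow> bool) \<Rightarrow> bool" where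
  "graph_iso V E W F \<longleftrightarrow> (\<exists>f. bij_betw f V W \<and> (\<forall>x\<in>V. \<forall>y\<in>V. E x y \<longleftrightarrow> F (f x) (f y)))"

definition KV :: "nat \<Rightarrow> nat \<Rightarrow> (nat + nat) set" where
  "KV p q = Inl ` {..<p} \<union> Inr ` {..<q}"

definition KE :: "nat \<Rightarrow> nat \<Rightarrow> (nat + nat) \<Rightarrow> (nat + nat) \<Rightarrow> bool" where
  "KE p q u v \<longleftrightarrow> u \<in> KV p q \<and> v \<in> KV p q \<and>
     ((isl u \<and> \<not> isl v) \<or> (\<not> isl u \<and> isl v))"

end

theory Submission
  imports Defs
begin

(* Take u \<noteq> v of equal degree b \<ge> n + 1 and split the vertices into their common neighbours C,
   the private neighbours of u and of v, and the set W of vertices adjacent to neither; then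
   |W| + 2 \<le> |C|.  As no path of length three joins two vertices of equal degree, every
   neighbour of a vertex of C lies in W (in particular u and v are not adjacent: otherwise
   u and v would lie on paths w1 u v w2 for all w1 \<noteq> w2 in C, so the degrees on C would be
   distinct, yet they take at most |W| + 1 values), and a private neighbour of u has no
   neighbour in N(v).  Moreover two vertices of C whose neighbourhoods have equal size span no
   edge between these neighbourhoods; a pigeonhole argument on the sizes gives
   e(C, W) + e(W) \<le> |C| |W|.  Counting edges, |E| \<ge> n^2 - 1 then forces b = n + 1, no private
   neighbours, W independent and C complete to W, i.e. G = K_{n+1,n-1}. *)

definition arc_count :: "('a \<Rightarrow> 'a \<Rightarrow> bool) \<Rightarrow> 'a set \<Rightarrow> 'a set \<Rightarrow> nat" where
  "arc_count E A B = (\<Sum>a\<in>A. card {b\<in>B. E a b})"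

lemma arc_count_Un_left:
  assumes "finite A" "finite A'" "A \<inter> A' = {}"
  shows "arc_count E (A \<union> A') B = arc_count E A B + arc_count E A' B"
  using assms by (simp add: arc_count_def sum.union_disjoint)

lemma arc_count_Un_right:
  assumes "finite B" "finite B'" "B \<inter> B' = {}"
  shows "arc_count E A (B \<union> B') = arc_count E A B + arc_count E A B'"
proof -
  have "{b\<in>B \<union> B'. E a b} = {b\<in>B. E a b} \<union> {b\<in>B'. E a b}" for a
    by auto
  then have "card {b\<in>B \<union> B'. E a b} = card {b\<in>B. E a b} + card {b\<in>B'. E a b}" for a
    using assms by (simp add: card_Un_disjoint disjoint_iff)
  then show ?thesis
    by (simp add: arc_count_def sum.distrib)
qed

lemma arc_count_commute:
  assumes "finite A" "finite B" "\<And>x y. E x y \<Longrightarrow> E y x"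
  shows "arc_count E A B = arc_count E B A"
proof -
  have "prod.swap ` (SIGMA a:A. {b\<in>B. E a b}) = (SIGMA b:B. {a\<in>A. E b a})"
    using assms(3) by force
  then have "card (SIGMA b:B. {a\<in>A. E b a}) = card (SIGMA a:A. {b\<in>B. E a b})"
    using card_image[OF inj_swap] by metis
  then show ?thesis
    using assms by (simp add: arc_count_def card_SigmaI)
qed

lemma arc_count_eq_0:
  assumes "\<And>a b. a \<in> A \<Longrightarrow> b \<in> B \<Longrightarrow> \<not> E a b"
  shows "arc_count E A B = 0"
  using assms by (auto simp: arc_count_def card_eq_0_iff intro!: sum.neutral)

lemma arc_count_le:
  assumes "\<And>a. a \<in> A \<Longrightarrow> card {b\<in>B. E a b} \<le> m"
  shows "arc_count E A B \<le> card A * m"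
  using sum_bounded_above[of A "\<lambda>a. card {b\<in>B. E a b}" m] assms by (simp add: arc_count_def)

lemma arc_count_add_card_le:
  assumes "finite B" "\<And>a. a \<in> A \<Longrightarrow> \<exists>b\<in>B. \<not> E a b"
  shows "arc_count E A B + card A \<le> card A * card B"
proof -
  have "card {b\<in>B. E a b} + 1 \<le> card B" if "a \<in> A" for a
  proof -
    have "{b\<in>B. E a b} \<subset> B"
      using assms(2)[OF that] by blast
    then have "card {b\<in>B. E a b} < card B"
      by (rule psubset_card_mono[OF assms(1)])
    then show ?thesis
      by simp
  qed
  then have "(\<Sum>a\<in>A. card {b\<in>B. E a b} + 1) \<le> card A * card B"
    using sum_bounded_above[of A "\<lambda>a. card {b\<in>B. E a b} + 1" "card B"] by simp
  then show ?thesis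
    by (simp add: arc_count_def sum_Suc)
qed

lemma arc_count_add_hole_le:
  assumes "finite W" "A \<subseteq> W" "B \<subseteq> W" "\<And>a b. a \<in> A \<Longrightarrow> b \<in> B \<Longrightarrow> \<not> F a b"
  shows "arc_count F W W + card A * card B \<le> card W * card W"
proof -
  have fin: "finite A" "finite (W - A)"
    using assms finite_subset by auto
  have A_le: "card A \<le> card W" and B_le: "card B \<le> card W"
    using assms by (simp_all add: card_mono)
  have "arc_count F A W \<le> card A * (card W - card B)"
  proof (rule arc_count_le)
    fix a assume "a \<in> A"
    then have "{b\<in>W. F a b} \<subseteq> W - B"
      using assms(4) by auto
    then show "card {b\<in>W. F a b} \<le> card W - card B"
      using assms by (metis card_Diff_subset card_mono finite_Diff finite_subset)
  qed
  moreover have "arc_count F (W - A) W \<le> (card W - card A) * card W"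
    using arc_count_le[where A="W - A" and E=F and B=W and m="card W"] assms fin
    by (simp add: card_mono card_Diff_subset)
  moreover have "arc_count F W W = arc_count F A W + arc_count F (W - A) W"
    using arc_count_Un_left[OF fin, of F W] assms(2) by (simp add: Un_absorb1)
  moreover have "card A * (card W - card B) + card A * card B = card A * card W"
    using B_le by (simp add: diff_mult_distrib2)
  moreover have "(card W - card A) * card W + card A * card W = card W * card W"
    using A_le by (simp add: diff_mult_distrib)
  ultimately show ?thesis
    by linarith
qed

lemma card_sq_le_sum_nat_set:
  fixes S :: "nat set"
  assumes "finite S"
  shows "card S * card S \<le> 2 * \<Sum>S + card S"
  using assms
proof (induction "card S" arbitrary: S)
  case 0
  then show ?case by simp
next
  case (Suc m)
  define M where "M = Max S"
  have "S \<noteq> {}"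
    using Suc.hyps(2) by auto
  then have M_in: "M \<in> S"
    using Suc.prems by (simp add: M_def)
  have "card (S - {M}) = m"
    using Suc.hyps(2) M_in Suc.prems by simp
  then have IH: "m * m \<le> 2 * \<Sum>(S - {M}) + m"
    using Suc.hyps(1)[of "S - {M}"] Suc.prems by simp
  have "S \<subseteq> {..M}"
    using Suc.prems by (auto simp: M_def)
  then have "m \<le> M"
    using Suc.hyps(2) card_mono[of "{..M}" S] by simp
  moreover have "\<Sum>S = M + \<Sum>(S - {M})"
    using Suc.prems M_in by (simp add: sum.remove)
  ultimately show ?case
    using IH Suc.hyps(2)[symmetric] by simp
qed

lemma obtain_largest_repeated_value:
  fixes g :: "'a \<Rightarrow> 'b::linorder"
  assumes "finite C" "\<not> inj_on g C"
  obtains w1 w2 where "w1 \<in> C" "w2 \<in> C" "w1 \<noteq> w2" "g w1 = g w2"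
    and "inj_on g {w\<in>C. g w1 < g w}"
proof -
  define R where "R = {w\<in>C. \<exists>w'\<in>C. w' \<noteq> w \<and> g w' = g w}"
  obtain x y where "x \<in> C" "y \<in> C" "x \<noteq> y" "g x = g y"
    using assms(2) unfolding inj_on_def by blast
  then have "x \<in> R"
    unfolding R_def by auto
  moreover have "finite (g ` R)"
    using assms(1) by (simp add: R_def)
  ultimately have "Max (g ` R) \<in> g ` R"
    by (intro Max_in) auto
  then obtain w1 where w1_max: "Max (g ` R) = g w1" and "w1 \<in> R"
    by (rule imageE)
  then obtain w2 where w12: "w1 \<in> C" "w2 \<in> C" "w1 \<noteq> w2" "g w1 = g w2"
    unfolding R_def by auto
  have "inj_on g {w\<in>C. g w1 < g w}"
  proof (rule inj_onI, rule ccontr)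
    fix a b
    assume "a \<in> {w\<in>C. g w1 < g w}" "b \<in> {w\<in>C. g w1 < g w}" "g a = g b" "a \<noteq> b"
    then have "a \<in> R" and "g w1 < g a"
      unfolding R_def by auto
    then show False
      using Max_ge[OF \<open>finite (g ` R)\<close>, of "g a"] w1_max by auto
  qed
  then show ?thesis
    by (rule that[OF w12])
qed

lemma sum_gap_lower_bound:
  fixes g :: "'a \<Rightarrow> nat"
  assumes "finite C" "\<And>w. w \<in> C \<Longrightarrow> g w \<le> p" "j \<le> p"
    and "inj_on g {w\<in>C. j < g w}" "p + 2 \<le> card C"
  shows "(p - j) * (p + j) + 3 * (p - j) \<le> 2 * (\<Sum>w\<in>C. p - g w)"
proof -
  define T where "T = {w\<in>C. j < g w}"
  define q where "q = p - j"
  define t where "t = card T"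
  have "T \<subseteq> C" "finite T"
    using assms(1) by (auto simp: T_def)
  have inj: "inj_on (\<lambda>w. p - g w) T"
  proof (rule inj_onI)
    fix x y
    assume "x \<in> T" "y \<in> T" "p - g x = p - g y"
    moreover from this have "g x = g y"
      using assms(2)[of x] assms(2)[of y] by (simp add: T_def)
    ultimately show "x = y"
      using assms(4) by (simp add: T_def inj_on_def)
  qed
  have "(\<lambda>w. p - g w) ` T \<subseteq> {..<q}"
  proof (rule image_subsetI)
    fix w
    assume "w \<in> T"
    then show "p - g w \<in> {..<q}"
      using assms(2)[of w] by (auto simp: T_def q_def)
  qed
  then have "card ((\<lambda>w. p - g w) ` T) \<le> q"
    using card_mono[of "{..<q}"] by fastforce
  then have "t \<le> q"
    by (simp add: card_image[OF inj] t_def)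
  have "t * t \<le> 2 * (\<Sum>w\<in>T. p - g w) + t"
    using card_sq_le_sum_nat_set[of "(\<lambda>w. p - g w) ` T"] \<open>finite T\<close>
    by (simp add: card_image[OF inj] sum.reindex[OF inj] t_def)
  moreover have "(card C - t) * q \<le> (\<Sum>w\<in>C - T. p - g w)"
  proof -
    have "q \<le> p - g w" if "w \<in> C - T" for w
      using that by (auto simp: T_def q_def intro: diff_le_mono2)
    then have "card (C - T) * q \<le> (\<Sum>w\<in>C - T. p - g w)"
      using sum_bounded_below[of "C - T" q "\<lambda>w. p - g w"] by simp
    then show ?thesis
      using \<open>T \<subseteq> C\<close> \<open>finite T\<close> by (simp add: card_Diff_subset t_def)
  qed
  moreover have "(\<Sum>w\<in>C. p - g w) = (\<Sum>w\<in>T. p - g w) + (\<Sum>w\<in>C - T. p - g w)"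
    using sum.subset_diff[OF \<open>T \<subseteq> C\<close> assms(1), of "\<lambda>w. p - g w"] by (simp add: add.commute)
  ultimately have "t * t + 2 * ((card C - t) * q) \<le> 2 * (\<Sum>w\<in>C. p - g w) + t"
    by linarith
  moreover obtain s where s: "q = t + s"
    using \<open>t \<le> q\<close> le_Suc_ex by blast
  moreover have p: "p = j + t + s"
    using assms(3) s by (simp add: q_def)
  moreover have "(j + s + 2) * q \<le> (card C - t) * q"
    using assms(5) p by (intro mult_le_mono1) linarith
  moreover have "q * (p + j) + 3 * q + (s * s + s) + t = t * t + 2 * ((j + s + 2) * q)"
    unfolding p s by (simp add: algebra_simps)
  ultimately show ?thesis
    unfolding q_def[symmetric] by linarith
qed

context
  fixes C :: "'a set" and W :: "'b set" and N :: "'a \<Rightarrow> 'b set" and F :: "'b \<Rightarrow> 'b \<Rightarrow> bool"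
  assumes finite: "finite C" "finite W"
    and N_subset: "\<And>w. w \<in> C \<Longrightarrow> N w \<subseteq> W"
    and no_arcs: "\<And>w1 w2 a b. \<lbrakk>w1 \<in> C; w2 \<in> C; w1 \<noteq> w2; card (N w1) = card (N w2);
      a \<in> N w1; b \<in> N w2\<rbrakk> \<Longrightarrow> \<not> F a b"
    and many: "card W + 2 \<le> card C"
begin

(* Let j be the largest size shared by two different sets N w1, N w2.  No F-arc joins them,
   which costs j * j arcs inside W, while the sizes above j are distinct and so fall short of
   |W| by at least 0, 1, 2, ...; together this leaves a slack of 3 (|W| - j). *)
lemma sum_card_arc_count_slack:
  obtains j where "2 * (\<Sum>w\<in>C. card (N w)) + arc_count F W W + 3 * (card W - j)
      \<le> 2 * card C * card W"
    and "card W \<le> j \<Longrightarrow> \<forall>a\<in>W. \<forall>b\<in>W. \<not> F a b"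
proof -
  define p where "p = card W"
  define g where "g w = card (N w)" for w
  have g_le: "g w \<le> p" if "w \<in> C" for w
    using N_subset[OF that] finite by (simp add: g_def p_def card_mono)
  have "\<not> inj_on g C"
  proof
    assume "inj_on g C"
    then have "card C = card (g ` C)"
      by (simp add: card_image)
    also have "\<dots> \<le> card {..p}"
      by (rule card_mono) (auto simp: g_le)
    finally show False
      using many by (simp add: p_def)
  qed
  then obtain w1 w2 where w12: "w1 \<in> C" "w2 \<in> C" "w1 \<noteq> w2" "g w1 = g w2"
    and inj: "inj_on g {w\<in>C. g w1 < g w}"
    by (rule obtain_largest_repeated_value[OF finite(1)])
  define j where "j = g w1"
  have "j \<le> p"
    using g_le[OF w12(1)] by (simp add: j_def)
  have hole: "\<not> F a b" if "a \<in> N w1" "b \<in> N w2" for a b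
    using no_arcs[OF w12(1-3) _ that] w12(4) by (simp add: g_def)
  have "arc_count F W W + card (N w1) * card (N w2) \<le> card W * card W"
    using arc_count_add_hole_le[OF finite(2) N_subset[OF w12(1)] N_subset[OF w12(2)] hole] .
  then have "arc_count F W W + j * j \<le> p * p"
    using w12(4) by (simp add: j_def g_def p_def)
  moreover have "(p - j) * (p + j) + 3 * (p - j) \<le> 2 * (\<Sum>w\<in>C. p - g w)"
    using sum_gap_lower_bound[OF finite(1) g_le \<open>j \<le> p\<close>] inj many
    by (simp add: j_def p_def)
  moreover have "(\<Sum>w\<in>C. p - g w) + (\<Sum>w\<in>C. g w) = card C * p"
  proof -
    have "(\<Sum>w\<in>C. p - g w) + (\<Sum>w\<in>C. g w) = (\<Sum>w\<in>C. p)"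
      unfolding sum.distrib[symmetric] by (rule sum.cong) (simp_all add: g_le)
    then show ?thesis
      by simp
  qed
  moreover have "(p - j) * (p + j) + j * j = p * p"
  proof -
    obtain r where "p = j + r"
      using \<open>j \<le> p\<close> le_Suc_ex by blast
    then show ?thesis
      by (simp add: algebra_simps)
  qed
  ultimately have "2 * (\<Sum>w\<in>C. g w) + arc_count F W W + 3 * (p - j) \<le> 2 * card C * p"
    by linarith
  moreover have "\<forall>a\<in>W. \<forall>b\<in>W. \<not> F a b" if "p \<le> j"
  proof -
    have "card (N w) = card W" if "w \<in> {w1, w2}" for w
      using that \<open>p \<le> j\<close> \<open>j \<le> p\<close> w12(4) by (auto simp: j_def g_def p_def)
    then have "N w1 = W" "N w2 = W"
      using N_subset w12(1,2) finite(2) by (simp_all add: card_subset_eq)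
    then show ?thesis
      using hole by blast
  qed
  ultimately show ?thesis
    using that[of j] by (simp add: g_def p_def)
qed

lemma sum_card_arc_count_le:
  "2 * (\<Sum>w\<in>C. card (N w)) + arc_count F W W \<le> 2 * card C * card W"
proof -
  obtain j where "2 * (\<Sum>w\<in>C. card (N w)) + arc_count F W W + 3 * (card W - j)
      \<le> 2 * card C * card W"
    using sum_card_arc_count_slack by blast
  then show ?thesis
    by linarith
qed

lemma sum_card_arc_count_eqD:
  assumes "2 * (\<Sum>w\<in>C. card (N w)) + arc_count F W W = 2 * card C * card W"
  shows "\<forall>a\<in>W. \<forall>b\<in>W. \<not> F a b" and "\<And>w. w \<in> C \<Longrightarrow> N w = W"
proof -
  obtain j where "2 * (\<Sum>w\<in>C. card (N w)) + arc_count F W W + 3 * (card W - j)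
      \<le> 2 * card C * card W"
    and "card W \<le> j \<Longrightarrow> \<forall>a\<in>W. \<forall>b\<in>W. \<not> F a b"
    using sum_card_arc_count_slack by blast
  then show F_empty: "\<forall>a\<in>W. \<forall>b\<in>W. \<not> F a b"
    using assms by simp
  then have "(\<Sum>w\<in>C. card (N w)) = (\<Sum>w\<in>C. card W)"
    using assms arc_count_eq_0[of W W F] by simp
  moreover have "card (N w) \<le> card W" if "w \<in> C" for w
    using N_subset[OF that] finite by (simp add: card_mono)
  ultimately show "N w = W" if "w \<in> C" for w
    using sum_mono_inv[OF _ _ that] N_subset[OF that] finite by (metis card_subset_eq)
qed

end

lemma complete_bipartite_graph_iso:
  assumes "finite A" "finite B" "A \<inter> B = {}" "card A = p" "card B = q"
    and adj: "\<And>x y. x \<in> A \<union> B \<Longrightarrow> y \<in> A \<union> B \<Longrightarrow> E x y \<longleftrightarrow> (x \<in> A \<longleftrightarrow> y \<in> B)"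
  shows "graph_iso (A \<union> B) E (KV p q) (KE p q)"
proof -
  obtain gA where gA: "bij_betw gA A {..<p}"
    using finite_same_card_bij[OF assms(1), of "{..<p}"] assms(4) by auto
  obtain gB where gB: "bij_betw gB B {..<q}"
    using finite_same_card_bij[OF assms(2), of "{..<q}"] assms(5) by auto
  define f where "f x = (if x \<in> A then Inl (gA x) else Inr (gB x))" for x
  have "bij_betw (Inl \<circ> gA) A (Inl ` {..<p})"
    by (rule bij_betw_trans[OF gA]) (simp add: inj_on_imp_bij_betw)
  then have bij_A: "bij_betw f A (Inl ` {..<p})"
    by (rule bij_betw_cong[THEN iffD1, rotated]) (simp add: f_def)
  have "bij_betw (Inr \<circ> gB) B (Inr ` {..<q})"
    by (rule bij_betw_trans[OF gB]) (simp add: inj_on_imp_bij_betw)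
  then have bij_B: "bij_betw f B (Inr ` {..<q})"
    by (rule bij_betw_cong[THEN iffD1, rotated]) (use assms(3) in \<open>auto simp: f_def\<close>)
  have bij: "bij_betw f (A \<union> B) (KV p q)"
    unfolding KV_def by (rule bij_betw_combine[OF bij_A bij_B]) auto
  have "E x y \<longleftrightarrow> KE p q (f x) (f y)" if "x \<in> A \<union> B" "y \<in> A \<union> B" for x y
  proof -
    have "f x \<in> KV p q" "f y \<in> KV p q"
      using bij that by (auto simp: bij_betw_def)
    then have "KE p q (f x) (f y) \<longleftrightarrow> (isl (f x) \<longleftrightarrow> \<not> isl (f y))"
      by (auto simp: KE_def)
    moreover have "isl (f z) \<longleftrightarrow> z \<in> A" for z
      by (simp add: f_def)
    ultimately show ?thesis
      using adj[OF that] that assms(3) by auto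
  qed
  with bij show ?thesis
    unfolding graph_iso_def by blast
qed

locale sgraph =
  fixes V :: "'a set" and E :: "'a \<Rightarrow> 'a \<Rightarrow> bool"
  assumes simple: "simple_graph V E"
begin

lemma finite_V: "finite V"
  using simple by (simp add: simple_graph_def)

lemma adj_sym: "E x y \<Longrightarrow> E y x"
  using simple by (simp add: simple_graph_def)

lemma adj_irrefl: "\<not> E x x"
  using simple by (simp add: simple_graph_def)

lemma adj_neq: "E x y \<Longrightarrow> x \<noteq> y"
  using adj_irrefl by blast

lemma adj_in_V:
  assumes "E x y"
  shows "x \<in> V" "y \<in> V"
  using simple assms by (simp_all add: simple_graph_def)

definition nbhd :: "'a \<Rightarrow> 'a set" where
  "nbhd x = {y\<in>V. E x y}"

lemma finite_nbhd: "finite (nbhd x)"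
  using finite_V by (simp add: nbhd_def)

lemma degree_eq_card_nbhd: "degree V E x = card (nbhd x)"
  by (simp add: degree_def nbhd_def)

lemma nbhd_subset: "nbhd x \<subseteq> V - {x}"
  using adj_irrefl by (auto simp: nbhd_def)

lemma degree_less_card:
  assumes "x \<in> V"
  shows "degree V E x < card V"
proof -
  have "degree V E x \<le> card (V - {x})"
    unfolding degree_eq_card_nbhd using finite_V nbhd_subset by (intro card_mono) auto
  also have "\<dots> < card V"
    by (rule card_Diff1_less[OF finite_V assms])
  finally show ?thesis .
qed

lemma sum_degree_eq_double_card_edges: "(\<Sum>x\<in>V. degree V E x) = 2 * card (edges V E)"
proof -
  define P where "P = (SIGMA x:V. nbhd x)"
  define fibre where "fibre e = {p\<in>P. {fst p, snd p} = e}" for e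
  have "edges V E \<subseteq> (\<lambda>(x, y). {x, y}) ` (V \<times> V)"
    by (auto simp: edges_def)
  then have fin_edges: "finite (edges V E)"
    using finite_V finite_subset by blast
  have "finite P"
    using finite_V finite_nbhd by (simp add: P_def)
  have "P = (\<Union>e\<in>edges V E. fibre e)"
    by (auto simp: P_def fibre_def edges_def nbhd_def; blast)
  then have "card P = (\<Sum>e\<in>edges V E. card (fibre e))"
    by (simp only:) (rule card_UN_disjoint, use fin_edges \<open>finite P\<close> in \<open>auto simp: fibre_def\<close>)
  also have "\<dots> = (\<Sum>e\<in>edges V E. 2)"
  proof (rule sum.cong)
    fix e
    assume "e \<in> edges V E"
    then obtain x y where e: "e = {x, y}" "x \<in> V" "y \<in> V" "E x y"
      by (auto simp: edges_def)
    then have "fibre e = {(x, y), (y, x)}"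
      using adj_sym by (auto simp: fibre_def P_def nbhd_def doubleton_eq_iff)
    then show "card (fibre e) = 2"
      using adj_neq[OF e(4)] by simp
  qed simp
  finally show ?thesis
    using finite_V finite_nbhd by (simp add: P_def card_SigmaI degree_eq_card_nbhd)
qed

lemma exists_equal_degrees:
  assumes "2 \<le> card V"
  shows "\<exists>u\<in>V. \<exists>v\<in>V. u \<noteq> v \<and> degree V E u = degree V E v"
proof (rule ccontr)
  assume "\<not> ?thesis"
  then have "inj_on (degree V E) V"
    by (auto simp: inj_on_def)
  then have "card (degree V E ` V) = card {..<card V}"
    by (simp add: card_image)
  moreover have "degree V E ` V \<subseteq> {..<card V}"
    using degree_less_card by auto
  ultimately have degrees: "degree V E ` V = {..<card V}"
    by (simp add: card_subset_eq)
  have "0 \<in> degree V E ` V" "card V - 1 \<in> degree V E ` V"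
    unfolding degrees using assms by auto
  then obtain x0 x1 where x0: "0 = degree V E x0" "x0 \<in> V"
    and x1: "card V - 1 = degree V E x1" "x1 \<in> V"
    by (meson imageE)
  have "x0 \<noteq> x1"
    using x0 x1 assms by fastforce
  have "card (nbhd x1) = card (V - {x1})"
    using x1 finite_V by (simp add: degree_eq_card_nbhd[symmetric])
  then have "nbhd x1 = V - {x1}"
    using finite_V nbhd_subset by (simp add: card_subset_eq)
  then have "x1 \<in> nbhd x0"
    using \<open>x0 \<noteq> x1\<close> x0(2) x1(2) adj_sym by (auto simp: nbhd_def)
  then show False
    using x0(1) finite_nbhd by (auto simp: degree_eq_card_nbhd)
qed

end

locale no_equal_degree_path3 = sgraph +
  assumes path3_free:
    "\<forall>u\<in>V. \<forall>v\<in>V. u \<noteq> v \<and> degree V E u = degree V E v \<longrightarrow> \<not> path3 V E u v"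
begin

lemma path3_ends_degree_neq:
  assumes "E a x" "E x y" "E y b" "distinct [a, x, y, b]"
  shows "degree V E a \<noteq> degree V E b"
proof
  assume "degree V E a = degree V E b"
  moreover have "path3 V E a b"
    unfolding path3_def using assms adj_in_V by blast
  moreover have "a \<in> V" "b \<in> V" "a \<noteq> b"
    using assms adj_in_V by auto
  ultimately show False
    using path3_free by blast
qed

end

locale high_degree_pair = no_equal_degree_path3 +
  fixes u v :: 'a
  assumes u_in_V: "u \<in> V" and v_in_V: "v \<in> V" and u_neq_v: "u \<noteq> v"
    and same_degree: "degree V E u = degree V E v"
    and high_degree: "card V + 2 \<le> 2 * degree V E u"
begin

definition common :: "'a set" where
  "common = nbhd u \<inter> nbhd v"

definition only_u :: "'a set" where
  "only_u = nbhd u - nbhd v"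

definition only_v :: "'a set" where
  "only_v = nbhd v - nbhd u"

definition outside :: "'a set" where
  "outside = V - (nbhd u \<union> nbhd v)"

lemma finite_parts: "finite common" "finite only_u" "finite only_v" "finite outside"
  using finite_nbhd finite_V by (simp_all add: common_def only_u_def only_v_def outside_def)

lemma card_only_u_add_card_common: "card only_u + card common = degree V E u"
  using card_Int_Diff[OF finite_nbhd, of u "nbhd v"]
  by (simp add: only_u_def common_def degree_eq_card_nbhd)

lemma card_only_v_eq: "card only_v = card only_u"
  using card_Int_Diff[OF finite_nbhd, of v "nbhd u"] card_only_u_add_card_common same_degree
  by (simp add: only_v_def common_def degree_eq_card_nbhd Int_commute)

lemma card_V_eq: "card V = card common + 2 * card only_u + card outside"
proof -
  have "card (nbhd u \<union> nbhd v) + card common = 2 * degree V E u"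
    using card_Un_Int[OF finite_nbhd finite_nbhd, of u v] same_degree
    by (simp add: common_def degree_eq_card_nbhd)
  moreover have "card V = card (nbhd u \<union> nbhd v) + card outside"
  proof -
    have "nbhd u \<union> nbhd v \<subseteq> V"
      by (auto simp: nbhd_def)
    then show ?thesis
      using card_Diff_subset[OF finite_subset[OF _ finite_V]] card_mono[OF finite_V]
      by (simp add: outside_def)
  qed
  ultimately show ?thesis
    using card_only_u_add_card_common by linarith
qed

lemma card_outside_add_two_le: "card outside + 2 \<le> card common"
  using card_V_eq high_degree card_only_u_add_card_common by linarith

lemma V_eq: "V = common \<union> only_u \<union> only_v \<union> outside"
  by (auto simp: common_def only_u_def only_v_def outside_def nbhd_def)

lemma common_adj:
  assumes "w \<in> common" "E w y"
  shows "y = u \<or> y = v \<or> y \<in> outside"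
proof (rule ccontr)
  assume "\<not> ?thesis"
  then have y: "y \<noteq> u" "y \<noteq> v" and "E u y \<or> E v y"
    using adj_in_V[OF assms(2)] by (auto simp: outside_def nbhd_def)
  have "E u w" "E v w"
    using assms(1) by (auto simp: common_def nbhd_def)
  then have w: "w \<noteq> u" "w \<noteq> v" "w \<noteq> y"
    using adj_neq assms(2) by auto
  from \<open>E u y \<or> E v y\<close> show False
  proof
    assume "E u y"
    have "distinct [v, w, y, u]"
      using y w u_neq_v by auto
    then have "degree V E v \<noteq> degree V E u"
      by (rule path3_ends_degree_neq[OF \<open>E v w\<close> assms(2) adj_sym[OF \<open>E u y\<close>]])
    then show False
      using same_degree by simp
  next
    assume "E v y"
    have "distinct [u, w, y, v]"
      using y w u_neq_v by auto
    then have "degree V E u \<noteq> degree V E v"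
      by (rule path3_ends_degree_neq[OF \<open>E u w\<close> assms(2) adj_sym[OF \<open>E v y\<close>]])
    then show False
      using same_degree by simp
  qed
qed

lemma not_adj_u_v: "\<not> E u v"
proof
  assume "E u v"
  have degree_range: "degree V E w \<in> {2..card outside + 2}" if "w \<in> common" for w
  proof -
    have "{u, v} \<subseteq> nbhd w"
      using that adj_sym u_in_V v_in_V by (auto simp: common_def nbhd_def)
    then have lower: "card {u, v} \<le> card (nbhd w)"
      by (rule card_mono[OF finite_nbhd])
    have "nbhd w \<subseteq> {u, v} \<union> outside"
      using common_adj[OF that] by (auto simp: nbhd_def)
    then have "card (nbhd w) \<le> card ({u, v} \<union> outside)"
      by (rule card_mono[rotated]) (simp add: finite_parts)
    also have "\<dots> \<le> card {u, v} + card outside"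
      by (rule card_Un_le)
    finally show ?thesis
      using lower u_neq_v by (simp add: degree_eq_card_nbhd)
  qed
  have "inj_on (degree V E) common"
  proof (rule inj_onI, rule ccontr)
    fix w1 w2
    assume w: "w1 \<in> common" "w2 \<in> common" "degree V E w1 = degree V E w2" "w1 \<noteq> w2"
    then have "E w1 u" "E v w2" "E u w2" "E v w1"
      using adj_sym by (auto simp: common_def nbhd_def)
    then have "distinct [w1, u, v, w2]"
      using adj_neq w(4) u_neq_v by auto
    then have "degree V E w1 \<noteq> degree V E w2"
      by (rule path3_ends_degree_neq[OF \<open>E w1 u\<close> \<open>E u v\<close> \<open>E v w2\<close>])
    then show False
      using w(3) by simp
  qed
  then have "card common = card (degree V E ` common)"
    by (simp add: card_image)
  also have "\<dots> \<le> card {2..card outside + 2}"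
    using degree_range by (intro card_mono) auto
  finally show False
    using card_outside_add_two_le by simp
qed

lemma u_in_outside: "u \<in> outside"
  using u_in_V adj_irrefl not_adj_u_v adj_sym by (auto simp: outside_def nbhd_def)

lemma v_in_outside: "v \<in> outside"
  using v_in_V adj_irrefl not_adj_u_v by (auto simp: outside_def nbhd_def)

lemma nbhd_common_subset: "w \<in> common \<Longrightarrow> nbhd w \<subseteq> outside"
  using common_adj u_in_outside v_in_outside by (auto simp: nbhd_def)

lemma exclusive_nbhd_adj:
  assumes "{a, b} = {u, v}" "x \<in> nbhd a - nbhd b" "E x y"
  shows "y \<notin> nbhd b \<and> y \<noteq> b"
proof -
  have "a \<noteq> b" "degree V E a = degree V E b" "\<not> E a b"
    using assms(1) u_neq_v same_degree not_adj_u_v adj_sym by (auto simp: doubleton_eq_iff)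
  have "E a x" "\<not> E b x" "x \<in> V"
    using assms(2) by (auto simp: nbhd_def)
  then have "y \<noteq> b"
    using assms(3) adj_sym by blast
  moreover have "y \<notin> nbhd b"
  proof
    assume "y \<in> nbhd b"
    then have "E y b"
      using adj_sym by (simp add: nbhd_def)
    then have "distinct [a, x, y, b]"
      using adj_neq \<open>E a x\<close> assms(3) \<open>a \<noteq> b\<close> \<open>\<not> E a b\<close> by auto
    then have "degree V E a \<noteq> degree V E b"
      by (rule path3_ends_degree_neq[OF \<open>E a x\<close> assms(3) \<open>E y b\<close>])
    then show False
      using \<open>degree V E a = degree V E b\<close> by simp
  qed
  ultimately show ?thesis
    by blast
qed

lemma only_u_adj: "x \<in> only_u \<Longrightarrow> E x y \<Longrightarrow> y \<notin> nbhd v \<and> y \<noteq> v"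
  using exclusive_nbhd_adj[of u v] by (simp add: only_u_def)

lemma only_v_adj: "x \<in> only_v \<Longrightarrow> E x y \<Longrightarrow> y \<notin> nbhd u \<and> y \<noteq> u"
  using exclusive_nbhd_adj[of v u] by (simp add: only_v_def insert_commute)

lemma common_same_degree_nonadjacent:
  assumes "w1 \<in> common" "w2 \<in> common" "w1 \<noteq> w2" "card (nbhd w1) = card (nbhd w2)"
    and "a \<in> nbhd w1" "b \<in> nbhd w2"
  shows "\<not> E a b"
proof
  assume "E a b"
  have "E w1 a" "E b w2"
    using assms(5,6) adj_sym by (auto simp: nbhd_def)
  have "a \<notin> common" "b \<notin> common"
    using nbhd_common_subset assms(1,2,5,6) by (auto simp: outside_def common_def)
  then have "distinct [w1, a, b, w2]"
    using assms(1-3) adj_neq \<open>E w1 a\<close> \<open>E a b\<close> \<open>E b w2\<close> by auto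
  then have "degree V E w1 \<noteq> degree V E w2"
    by (rule path3_ends_degree_neq[OF \<open>E w1 a\<close> \<open>E a b\<close> \<open>E b w2\<close>])
  then show False
    using assms(4) by (simp add: degree_eq_card_nbhd)
qed

lemma arc_count_common_outside: "arc_count E common outside = (\<Sum>w\<in>common. card (nbhd w))"
  unfolding arc_count_def
proof (rule sum.cong)
  fix w
  assume "w \<in> common"
  then have "{y\<in>outside. E w y} = nbhd w"
    using nbhd_common_subset[of w] by (auto simp: nbhd_def outside_def)
  then show "card {y\<in>outside. E w y} = card (nbhd w)"
    by simp
qed simp

lemma common_outside_arcs_le:
  "2 * arc_count E common outside + arc_count E outside outside
    \<le> 2 * (card common * card outside)"
  using sum_card_arc_count_le[OF finite_parts(1,4) nbhd_common_subset
      common_same_degree_nonadjacent card_outside_add_two_le]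
  by (simp add: arc_count_common_outside mult.assoc)

lemma common_outside_arcs_eq:
  assumes "2 * arc_count E common outside + arc_count E outside outside
    = 2 * (card common * card outside)"
  shows "\<forall>a\<in>outside. \<forall>b\<in>outside. \<not> E a b" and "\<And>w. w \<in> common \<Longrightarrow> nbhd w = outside"
  using sum_card_arc_count_eqD[OF finite_parts(1,4) nbhd_common_subset
      common_same_degree_nonadjacent card_outside_add_two_le] assms
  by (simp_all add: arc_count_common_outside mult.assoc)

lemma only_u_arcs_le: "arc_count E only_u only_u + card only_u \<le> card only_u * card only_u"
  by (rule arc_count_add_card_le) (use finite_parts adj_irrefl in auto)

lemma only_u_outside_arcs_le:
  "arc_count E only_u outside + card only_u \<le> card only_u * card outside"
  by (rule arc_count_add_card_le) (use finite_parts v_in_outside only_u_adj in auto)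

lemma only_v_arcs_le: "arc_count E only_v only_v + card only_v \<le> card only_v * card only_v"
  by (rule arc_count_add_card_le) (use finite_parts adj_irrefl in auto)

lemma only_v_outside_arcs_le:
  "arc_count E only_v outside + card only_v \<le> card only_v * card outside"
  by (rule arc_count_add_card_le) (use finite_parts u_in_outside only_v_adj in auto)

lemma sum_degree_split:
  "(\<Sum>x\<in>V. degree V E x) = 2 * arc_count E common outside + arc_count E outside outside
    + arc_count E only_u only_u + 2 * arc_count E only_u outside
    + arc_count E only_v only_v + 2 * arc_count E only_v outside"
proof -
  have parts: "V = common \<union> (only_u \<union> (only_v \<union> outside))"
    using V_eq by blast
  have disjoint: "common \<inter> (only_u \<union> (only_v \<union> outside)) = {}"
    "only_u \<inter> (only_v \<union> outside) = {}" "only_v \<inter> outside = {}"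
    by (auto simp: common_def only_u_def only_v_def outside_def)
  have finite: "finite (only_u \<union> (only_v \<union> outside))" "finite (only_v \<union> outside)"
    using finite_parts by simp_all
  have split_left: "arc_count E V B = arc_count E common B + arc_count E only_u B
      + arc_count E only_v B + arc_count E outside B" for B
    by (subst parts) (simp add: arc_count_Un_left finite_parts finite disjoint)
  have split_right: "arc_count E A V = arc_count E A common + arc_count E A only_u
      + arc_count E A only_v + arc_count E A outside" for A
    by (subst parts) (simp add: arc_count_Un_right finite_parts finite disjoint)
  have common_out: "b \<in> outside" if "a \<in> common" "E a b" for a b
    using nbhd_common_subset[OF that(1)] adj_in_V[OF that(2)] that(2) by (auto simp: nbhd_def)
  have "arc_count E common common = 0" "arc_count E common only_u = 0"
    "arc_count E common only_v = 0"
    using common_out by (auto intro!: arc_count_eq_0 simp: outside_def common_def only_u_def only_v_def)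
  moreover have "arc_count E only_u common = 0" "arc_count E only_u only_v = 0"
    using only_u_adj by (auto intro!: arc_count_eq_0 simp: common_def only_v_def)
  moreover have "arc_count E only_v common = 0" "arc_count E only_v only_u = 0"
    using only_v_adj by (auto intro!: arc_count_eq_0 simp: common_def only_u_def)
  moreover have "arc_count E outside common = arc_count E common outside"
    "arc_count E outside only_u = arc_count E only_u outside"
    "arc_count E outside only_v = arc_count E only_v outside"
    using finite_parts adj_sym by (blast intro: arc_count_commute)+
  moreover have "(\<Sum>x\<in>V. degree V E x) = arc_count E V V"
    by (simp add: arc_count_def degree_def)
  ultimately show ?thesis
    unfolding split_left split_right by simp
qed

lemma dense_part_sizes:
  assumes "card V = 2 * n" "n\<^sup>2 \<le> card (edges V E) + 1"
  shows "only_u = {}" and "card common = card outside + 2"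
proof -
  define c p k where "c = card common" and "p = card outside" and "k = card only_u"
  have "2 * (n * n) \<le> (\<Sum>x\<in>V. degree V E x) + 2"
    using assms(2) sum_degree_eq_double_card_edges by (simp add: power2_eq_square)
  moreover have "(\<Sum>x\<in>V. degree V E x) + 6 * k \<le> 2 * (c * p) + 2 * (k * k) + 4 * (k * p)"
    using sum_degree_split common_outside_arcs_le only_u_arcs_le only_u_outside_arcs_le
      only_v_arcs_le[unfolded card_only_v_eq] only_v_outside_arcs_le[unfolded card_only_v_eq]
    unfolding c_def p_def k_def by linarith
  moreover obtain e where e: "c = p + 2 + e"
    using card_outside_add_two_le le_Suc_ex unfolding c_def p_def by blast
  moreover have "4 * (n * n) = 4 * (c * p) + 4 * (k * k) + 8 * (k * p) + 4
      + (e * e + 4 * e + 8 * k + 4 * (e * k))"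
  proof -
    have n: "2 * n = 2 * p + 2 + e + 2 * k"
      using assms(1) card_V_eq e unfolding c_def p_def k_def by simp
    have "4 * (n * n) = (2 * n) * (2 * n)"
      by simp
    also have "\<dots> = 4 * ((p + 2 + e) * p) + 4 * (k * k) + 8 * (k * p) + 4
        + (e * e + 4 * e + 8 * k + 4 * (e * k))"
      unfolding n by (simp add: algebra_simps)
    finally show ?thesis
      using e by simp
  qed
  ultimately have "e * e + 4 * e + 20 * k + 4 * (e * k) \<le> 0"
    by linarith
  then have "e = 0" "k = 0"
    by simp_all
  then show "only_u = {}" "card common = card outside + 2"
    using finite_parts e by (simp_all add: c_def p_def k_def)
qed

lemma dense_graph_iso:
  assumes "card V = 2 * n" "n\<^sup>2 \<le> card (edges V E) + 1"
  shows "degree V E u = n + 1" and "graph_iso V E (KV (n + 1) (n - 1)) (KE (n + 1) (n - 1))"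
proof -
  have "only_u = {}" and two_more: "card common = card outside + 2"
    using dense_part_sizes[OF assms] by simp_all
  moreover have "only_v = {}"
    using card_only_v_eq finite_parts \<open>only_u = {}\<close> by simp
  ultimately have V: "V = common \<union> outside"
    using V_eq by simp
  have card_outside: "card outside + 1 = n"
    using assms(1) card_V_eq two_more \<open>only_u = {}\<close> by simp
  then have card_common: "card common = n + 1"
    using two_more by simp
  then show "degree V E u = n + 1"
    using card_only_u_add_card_common \<open>only_u = {}\<close> by simp
  have "2 * (card common * card outside) + 2 = 2 * n\<^sup>2"
    unfolding card_common card_outside[symmetric] by (simp add: power2_eq_square algebra_simps)
  also have "\<dots> \<le> (\<Sum>x\<in>V. degree V E x) + 2"
    using assms(2) sum_degree_eq_double_card_edges by simp
  also have "(\<Sum>x\<in>V. degree V E x) = 2 * arc_count E common outside + arc_count E outside outside"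
    using sum_degree_split \<open>only_u = {}\<close> \<open>only_v = {}\<close> by (simp add: arc_count_def)
  finally have "2 * arc_count E common outside + arc_count E outside outside
      = 2 * (card common * card outside)"
    using common_outside_arcs_le by linarith
  note tight = common_outside_arcs_eq[OF this]
  have disjoint: "common \<inter> outside = {}"
    by (auto simp: common_def outside_def)
  have adj: "E x y \<longleftrightarrow> (x \<in> common \<longleftrightarrow> y \<in> outside)"
    if "x \<in> common \<union> outside" "y \<in> common \<union> outside" for x y
  proof (cases "x \<in> common")
    case True
    have "y \<in> V"
      using that(2) V by blast
    then have "E x y \<longleftrightarrow> y \<in> nbhd x"
      by (simp add: nbhd_def)
    then show ?thesis
      using tight(2)[OF True] True by simp
  next
    case False
    then have "x \<in> outside"
      using that(1) by blast
    show ?thesis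
    proof (cases "y \<in> common")
      case True
      then have "x \<in> nbhd y"
        using tight(2)[OF True] \<open>x \<in> outside\<close> by simp
      then have "E y x"
        by (simp add: nbhd_def)
      then show ?thesis
        using adj_sym False True disjoint by blast
    next
      case False
      then have "y \<in> outside"
        using that(2) by blast
      then show ?thesis
        using tight(1) \<open>x \<in> outside\<close> \<open>x \<notin> common\<close> by blast
    qed
  qed
  have "card outside = n - 1"
    using card_outside by simp
  with complete_bipartite_graph_iso[OF finite_parts(1,4) disjoint card_common _ adj]
  show "graph_iso V E (KV (n + 1) (n - 1)) (KE (n + 1) (n - 1))"
    using V by simp
qed

end

theorem lemma3p1:
  fixes V :: "'a set" and E :: "'a \<Rightarrow> 'a \<Rightarrow> bool" and n :: nat
  assumes "simple_graph V E"
    and "n \<ge> 3"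
    and "card V = 2 * n"
    and "card (edges V E) \<ge> n\<^sup>2 - 1"
    and "\<forall>u\<in>V. \<forall>v\<in>V. u \<noteq> v \<and> degree V E u = degree V E v \<longrightarrow> \<not> path3 V E u v"
  defines "\<beta> \<equiv> GREATEST k. \<exists>u\<in>V. \<exists>v\<in>V. u \<noteq> v \<and> degree V E u = k \<and> degree V E v = k"
  shows "\<beta> \<le> n + 1 \<and> (\<beta> = n + 1 \<longrightarrow> graph_iso V E (KV (n + 1) (n - 1)) (KE (n + 1) (n - 1)))"
proof -
  interpret no_equal_degree_path3 V E
    using assms(1,5) by unfold_locales
  have "\<exists>u\<in>V. \<exists>v\<in>V. u \<noteq> v \<and> degree V E u = \<beta> \<and> degree V E v = \<beta>"
    unfolding \<beta>_def
  proof (rule GreatestI_ex_nat)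
    show "\<exists>k. \<exists>u\<in>V. \<exists>v\<in>V. u \<noteq> v \<and> degree V E u = k \<and> degree V E v = k"
      using exists_equal_degrees assms(2,3) by fastforce
    show "k \<le> card V" if "\<exists>u\<in>V. \<exists>v\<in>V. u \<noteq> v \<and> degree V E u = k \<and> degree V E v = k" for k
      using that degree_less_card by fastforce
  qed
  then obtain u v where uv: "u \<in> V" "v \<in> V" "u \<noteq> v" "degree V E u = \<beta>" "degree V E v = \<beta>"
    by blast
  show ?thesis
  proof (cases "\<beta> \<le> n")
    case False
    then interpret high_degree_pair V E u v
      using uv assms(3) by unfold_locales simp_all
    have "n\<^sup>2 \<le> card (edges V E) + 1"
      using assms(4) by arith
    then show ?thesis
      using dense_graph_iso assms(3) uv(4) by simp
  qed simp
qed

end
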